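(* Let $d\ge2$ and $L\ge1$ be integers. Then (i) $\displaystyle\int_{-1}^1R_L(t)^2(1-t^2)^{d/2-1}\,dt=\frac{|\mathbb{S}^d|}{|\mathbb{S}^{d-1}|}\left(\binom{d+L}{d}+\binom{d+L-1}{d}\right)$; (ii) $\displaystyle\int_{-1}^1R_L(t)^2t^2(1-t^2)^{d/2-1}\,dt=\frac{|\mathbb{S}^d|}{|\mathbb{S}^{d-1}|}\left\{\frac{d(L+1)}{L(d+2L+1)}+\frac{d+4L-2}{d+2L-1}\right\}\binom{d+L-1}{d}$.
   Context: $C_\ell^{((d-1)/2)}$ is the Gegenbauer polynomial of degree $\ell$ (orthogonal on $[-1,1]$ w.r.t. $(1-x^2)^{d/2-1}$), $Q_\ell(x)=\frac{d+2\ell-1}{d-1}C_\ell^{((d-1)/2)}(x)$, and $R_L(x)=\sum_{\ell=0}^LQ_\ell(x)$. $|\mathbb{S}^d|=2\pi^{(d+1)/2}/\Gamma(\frac{d+1}{2})$ is the surface area of the unit sphere $\mathbb{S}^d\subset\mathbb{R}^{d+1}$. *)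

theory Defs
  imports "HOL-Analysis.Analysis"
begin

text \<open>Gegenbauer polynomial C_n^(lam)(x), via the standard explicit formula
  C_n^(lam)(x) = sum_{k=0}^{floor(n/2)} (-1)^k Gamma(n-k+lam)/(Gamma(lam) k! (n-2k)!) (2x)^(n-2k),
  where Gamma(n-k+lam)/Gamma(lam) is the rising factorial (lam)_(n-k).\<close>
definition gegenbauer :: "nat \<Rightarrow> real \<Rightarrow> real \<Rightarrow> real" where
  "gegenbauer n lam x =
     (\<Sum>k\<le>n div 2. (-1)^k * pochhammer lam (n - k) / (fact k * fact (n - 2*k)) * (2*x)^(n - 2*k))"

definition Q_poly :: "nat \<Rightarrow> nat \<Rightarrow> real \<Rightarrow> real" where
  "Q_poly d l x = (real d + 2 * real l - 1) / (real d - 1) * gegenbauer l ((real d - 1) / 2) x"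

definition R_poly :: "nat \<Rightarrow> nat \<Rightarrow> real \<Rightarrow> real" where
  "R_poly d L x = (\<Sum>l\<le>L. Q_poly d l x)"

text \<open>Surface area of the unit sphere S^d in R^(d+1).\<close>
definition sphere_area :: "nat \<Rightarrow> real" where
  "sphere_area d = 2 * pi powr ((real d + 1) / 2) / Gamma ((real d + 1) / 2)"

end

(*
  The Q_l are orthogonal on [-1,1] for the weight w(t) = (1 - t^2)^(d/2 - 1): integrating Lagrange's
  identity for the Gegenbauer equation in Sturm--Liouville form gives
  (m (m + d - 1) - n (n + d - 1)) <Q_n, Q_m> = 0.  Pairing the three-term recurrence
  t Q_l = a_l Q_(l+1) + b_l Q_(l-1) with Q_(l+1) in two ways gives a_l |Q_(l+1)|^2 = b_(l+1) |Q_l|^2,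
  hence |Q_l|^2 = c N(d,l), where c = Beta(1/2, d/2) = |S^d| / |S^(d-1)| is the integral of w and
  N(d,l) is the dimension of the spherical harmonics of degree l on S^d.  Part (i) is Parseval's
  identity for R_L = Q_0 + ... + Q_L.  For part (ii) the recurrence telescopes to
  t R_L = R_(L-1) + a_(L-1) Q_L + a_L Q_(L+1), and Parseval's identity applies again.
*)

theory Submission
  imports Defs
begin

definition gegenbauer_coeff :: "real \<Rightarrow> nat \<Rightarrow> nat \<Rightarrow> real" where
  "gegenbauer_coeff lam n k =
     (if 2 * k \<le> n then (-1)^k * pochhammer lam (n - k) / (fact k * fact (n - 2 * k)) else 0)"

lemma gegenbauer_eq_sum_coeff:
  assumes "n \<le> N"
  shows "gegenbauer n lam x = (\<Sum>k\<le>N. gegenbauer_coeff lam n k * (2 * x)^(n - 2 * k))"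
  unfolding gegenbauer_def
  by (rule sum.mono_neutral_cong_left) (use assms in \<open>auto simp: gegenbauer_coeff_def\<close>)

lemma gegenbauer_0 [simp]: "gegenbauer 0 lam x = 1"
  by (simp add: gegenbauer_def)

lemma gegenbauer_1 [simp]: "gegenbauer 1 lam x = 2 * lam * x"
  by (simp add: gegenbauer_def)

lemma gegenbauer_coeff_0_recurrence:
  "real (n + 2) * gegenbauer_coeff lam (n + 2) 0 = (real n + 1 + lam) * gegenbauer_coeff lam (n + 1) 0"
proof -
  have "pochhammer lam (n + 2) = pochhammer lam n * (lam + real n) * (lam + real n + 1)"
       "pochhammer lam (n + 1) = pochhammer lam n * (lam + real n)"
    by (simp_all add: pochhammer_Suc numeral_2_eq_2 algebra_simps)
  moreover have "fact (n + 2) = real (n + 2) * (real (n + 1) * fact n)"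
                "fact (n + 1) = real (n + 1) * (fact n :: real)"
    by (simp_all add: numeral_2_eq_2 algebra_simps)
  ultimately show ?thesis
    by (simp add: gegenbauer_coeff_def field_simps del: of_nat_Suc of_nat_add fact_Suc)
qed

lemma gegenbauer_coeff_recurrence:
  "real (n + 2) * gegenbauer_coeff lam (n + 2) k =
     (real n + 1 + lam) * gegenbauer_coeff lam (n + 1) k
     - (real n + 2 * lam) * (if k = 0 then 0 else gegenbauer_coeff lam n (k - 1))"
proof (cases "k = 0")
  case True
  then show ?thesis using gegenbauer_coeff_0_recurrence[of n lam] by simp
next
  case False
  then obtain j where k: "k = Suc j" by (cases k) auto
  show ?thesis
  proof (cases "2 * j \<le> n")
    case False
    then show ?thesis using k by (simp add: gegenbauer_coeff_def)
  next
    case True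
    then obtain m where n: "n = 2 * j + m" by (metis le_add_diff_inverse)
    have fj: "fact (Suc j) = real (Suc j) * (fact j :: real)" by simp
    show ?thesis
    proof (cases m)
      case 0
      have "pochhammer lam (Suc j) = pochhammer lam j * (lam + real j)"
        by (simp add: pochhammer_Suc)
      then show ?thesis
        using k n 0 by (simp add: gegenbauer_coeff_def fj divide_simps del: fact_Suc)
                       (simp add: algebra_simps)
    next
      case (Suc i)
      define P where "P = pochhammer lam (j + m)"
      define F where "F = (fact i :: real)"
      define G where "G = (fact j :: real)"
      have FG: "F > 0" "G > 0" "real m > 0" using Suc by (simp_all add: F_def G_def)
      have fm: "fact m = real m * F" using Suc by (simp add: F_def)
      have A2: "gegenbauer_coeff lam (n + 2) (Suc j)
          = (-1)^Suc j * (P * (lam + real j + real m)) / ((real j + 1) * G * (real m * F))"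
        using n fm by (simp add: gegenbauer_coeff_def P_def G_def pochhammer_Suc algebra_simps)
      have A1: "gegenbauer_coeff lam (n + 1) (Suc j) = (-1)^Suc j * P / ((real j + 1) * G * F)"
        using n Suc by (simp add: gegenbauer_coeff_def P_def G_def F_def algebra_simps)
      have A0: "gegenbauer_coeff lam n j = (-1)^j * P / (G * (real m * F))"
        using n fm by (simp add: gegenbauer_coeff_def P_def G_def algebra_simps)
      have "real j + 1 \<noteq> 0" "1 + real j \<noteq> 0" by linarith+
      then show ?thesis
        unfolding k using FG
        by (simp only: A0 A1 A2 nat.distinct diff_Suc_1 if_False)
           (simp add: divide_simps n, simp add: Suc algebra_simps)
    qed
  qed
qed

lemma gegenbauer_recurrence:
  "real (n + 2) * gegenbauer (n + 2) lam x =
     2 * (real n + 1 + lam) * x * gegenbauer (n + 1) lam x - (real n + 2 * lam) * gegenbauer n lam x"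
proof -
  define A where "A = gegenbauer_coeff lam"
  define y where "y = 2 * x"
  have shift_up: "(\<Sum>k\<le>n + 2. A (n + 1) k * y^(n + 2 - 2 * k)) = y * gegenbauer (n + 1) lam x"
  proof -
    have "A (n + 1) k * y^(n + 2 - 2 * k) = y * (A (n + 1) k * y^(n + 1 - 2 * k))" for k
      by (cases "2 * k \<le> n + 1") (auto simp: A_def gegenbauer_coeff_def Suc_diff_le)
    then show ?thesis
      by (simp only: gegenbauer_eq_sum_coeff[of "n + 1" "n + 2"] A_def y_def sum_distrib_left)
  qed
  have shift_index:
    "(\<Sum>k\<le>n + 2. (if k = 0 then 0 else A n (k - 1)) * y^(n + 2 - 2 * k)) = gegenbauer n lam x"
    by (simp add: sum.atMost_Suc_shift gegenbauer_eq_sum_coeff[of n "Suc n"] A_def y_def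
             del: sum.atMost_Suc)
  have "real (n + 2) * gegenbauer (n + 2) lam x = (\<Sum>k\<le>n + 2. real (n + 2) * A (n + 2) k * y^(n + 2 - 2 * k))"
    by (simp only: gegenbauer_eq_sum_coeff[OF order_refl] sum_distrib_left A_def y_def mult.assoc)
  also have "\<dots> = (real n + 1 + lam) * (\<Sum>k\<le>n + 2. A (n + 1) k * y^(n + 2 - 2 * k))
      - (real n + 2 * lam) * (\<Sum>k\<le>n + 2. (if k = 0 then 0 else A n (k - 1)) * y^(n + 2 - 2 * k))"
    by (simp only: A_def gegenbauer_coeff_recurrence left_diff_distrib sum_subtractf
          sum_distrib_left mult.assoc)
  finally show ?thesis
    unfolding shift_up shift_index by (simp add: y_def algebra_simps)
qed

definition gegenbauer_deriv :: "real \<Rightarrow> nat \<Rightarrow> real \<Rightarrow> real" where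
  "gegenbauer_deriv lam n x =
     (\<Sum>k\<le>n. gegenbauer_coeff lam n k * (real (n - 2 * k) * 2 * (2 * x)^(n - 2 * k - 1)))"

definition gegenbauer_deriv2 :: "real \<Rightarrow> nat \<Rightarrow> real \<Rightarrow> real" where
  "gegenbauer_deriv2 lam n x =
     (\<Sum>k\<le>n. gegenbauer_coeff lam n k *
        (real (n - 2 * k) * real (n - 2 * k - 1) * 4 * (2 * x)^(n - 2 * k - 2)))"

lemma has_real_derivative_power_double:
  "((\<lambda>x. (2 * x)^m) has_real_derivative real m * 2 * (2 * x)^(m - 1)) (at x within S)"
  using DERIV_power[OF DERIV_cmult_Id[of 2], of m] by (simp add: mult.assoc)

lemma gegenbauer_has_real_derivative:
  "(gegenbauer n lam has_real_derivative gegenbauer_deriv lam n x) (at x within S)"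
proof -
  have "((\<lambda>x. \<Sum>k\<le>n. gegenbauer_coeff lam n k * (2 * x)^(n - 2 * k))
          has_real_derivative gegenbauer_deriv lam n x) (at x within S)"
    unfolding gegenbauer_deriv_def by (intro DERIV_sum DERIV_cmult has_real_derivative_power_double)
  moreover have "(\<lambda>x. \<Sum>k\<le>n. gegenbauer_coeff lam n k * (2 * x)^(n - 2 * k)) = gegenbauer n lam"
    by (rule ext) (rule gegenbauer_eq_sum_coeff[OF order_refl, symmetric])
  ultimately show ?thesis by simp
qed

lemma gegenbauer_deriv_has_real_derivative:
  "(gegenbauer_deriv lam n has_real_derivative gegenbauer_deriv2 lam n x) (at x within S)"
proof -
  have "(gegenbauer_deriv lam n has_real_derivative
          (\<Sum>k\<le>n. gegenbauer_coeff lam n k * ((real (n - 2 * k) * 2) *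
             (real (n - 2 * k - 1) * 2 * (2 * x)^(n - 2 * k - 1 - 1))))) (at x within S)"
    unfolding gegenbauer_deriv_def[abs_def]
    by (intro DERIV_sum DERIV_cmult has_real_derivative_power_double)
  then show ?thesis
    by (simp add: gegenbauer_deriv2_def algebra_simps)
qed

lemma continuous_on_gegenbauer: "continuous_on S (gegenbauer n lam)"
  by (meson DERIV_isCont continuous_at_imp_continuous_on gegenbauer_has_real_derivative)

lemma continuous_on_gegenbauer_deriv: "continuous_on S (gegenbauer_deriv lam n)"
  by (meson DERIV_isCont continuous_at_imp_continuous_on gegenbauer_deriv_has_real_derivative)

lemma gegenbauer_ode_coeff:
  fixes y lam :: real and n k :: nat
  defines "A \<equiv> gegenbauer_coeff lam n k"
  shows "A * (real (n - 2 * k) * real (n - 2 * k - 1) * 4 * y^(n - 2 * k - 2)) * (1 - (y / 2)^2)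
      - (2 * lam + 1) * (y / 2) * (A * (real (n - 2 * k) * 2 * y^(n - 2 * k - 1)))
      + real n * (real n + 2 * lam) * (A * y^(n - 2 * k))
    = 4 * A * real (n - 2 * k) * real (n - 2 * k - 1) * y^(n - 2 * k - 2)
      + 4 * real k * (real n - real k + lam) * A * y^(n - 2 * k)"
proof (cases "2 * k \<le> n")
  case False
  then show ?thesis by (simp add: A_def gegenbauer_coeff_def)
next
  case True
  then obtain m where n: "n = 2 * k + m" by (metis le_add_diff_inverse)
  show ?thesis
  proof (cases "m \<le> 1")
    case True
    then consider "m = 0" | "m = 1" by linarith
    then show ?thesis by cases (use n in \<open>simp_all add: algebra_simps\<close>)
  next
    case False
    then obtain j where "m = j + 2" by (metis add.commute le_add_diff_inverse not_less_eq_eq one_add_one plus_1_eq_Suc)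
    then have "y^(n - 2 * k) = y * y * y^j" "y^(n - 2 * k - 1) = y * y^j" "y^(n - 2 * k - 2) = y^j"
      "real (n - 2 * k) = real j + 2" "real (n - 2 * k - 1) = real j + 1"
      "real n = 2 * real k + real j + 2"
      using n by simp_all
    then show ?thesis by (simp add: power2_eq_square algebra_simps)
  qed
qed

lemma gegenbauer_coeff_shift:
  fixes y :: real
  shows "4 * gegenbauer_coeff lam n k * real (n - 2 * k) * real (n - 2 * k - 1) * y^(n - 2 * k - 2)
    = - (4 * real (Suc k) * (real n - real (Suc k) + lam) * gegenbauer_coeff lam n (Suc k)
         * y^(n - 2 * Suc k))"
proof (cases "2 * k + 2 \<le> n")
  case False
  then have "gegenbauer_coeff lam n k * real (n - 2 * k) * real (n - 2 * k - 1) = 0"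
    by (cases "2 * k \<le> n") (auto simp: gegenbauer_coeff_def)
  with False show ?thesis by (simp add: gegenbauer_coeff_def)
next
  case True
  then obtain i where n: "n = 2 * k + 2 + i" by (metis le_add_diff_inverse)
  define P where "P = pochhammer lam (k + i + 1)"
  define F where "F = (fact i :: real)"
  define G where "G = (fact k :: real)"
  have FG: "F \<noteq> 0" "G \<noteq> 0" unfolding F_def G_def by simp_all
  have A0: "gegenbauer_coeff lam n k
      = (-1)^k * (P * (lam + real k + real i + 1)) / (G * ((real i + 2) * (real i + 1) * F))"
  proof -
    have "n - k = Suc (k + i + 1)" "n - 2 * k = Suc (Suc i)" using n by simp_all
    then show ?thesis
      unfolding gegenbauer_coeff_def P_def G_def F_def using n by (simp add: pochhammer_Suc algebra_simps)
  qed
  have A1: "gegenbauer_coeff lam n (Suc k) = (-1)^(Suc k) * P / ((real k + 1) * G * F)"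
  proof -
    have "n - Suc k = k + i + 1" "n - 2 * Suc k = i" using n by simp_all
    then show ?thesis
      unfolding gegenbauer_coeff_def P_def G_def F_def using n by (simp add: algebra_simps)
  qed
  have "real (n - 2 * k) = real i + 2" "real (n - 2 * k - 1) = real i + 1"
     "n - 2 * k - 2 = n - 2 * Suc k" "real n = 2 * real k + real i + 2"
    using n by simp_all
  moreover have "real k + 1 \<noteq> 0" "real i + 1 \<noteq> 0" "real i + 2 \<noteq> 0" by linarith+
  ultimately show ?thesis
    using FG by (simp only: A0 A1) (simp add: divide_simps, simp add: algebra_simps)
qed

lemma gegenbauer_ode:
  "(1 - x^2) * gegenbauer_deriv2 lam n x - (2 * lam + 1) * x * gegenbauer_deriv lam n x
     + real n * (real n + 2 * lam) * gegenbauer n lam x = 0"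
proof -
  define y where "y = 2 * x"
  define V where "V k = 4 * real k * (real n - real k + lam) * gegenbauer_coeff lam n k * y^(n - 2 * k)"
    for k
  have "(1 - x^2) * gegenbauer_deriv2 lam n x - (2 * lam + 1) * x * gegenbauer_deriv lam n x
          + real n * (real n + 2 * lam) * gegenbauer n lam x
      = (\<Sum>k\<le>n. gegenbauer_coeff lam n k *
            (real (n - 2 * k) * real (n - 2 * k - 1) * 4 * y^(n - 2 * k - 2)) * (1 - (y / 2)^2)
          - (2 * lam + 1) * (y / 2) * (gegenbauer_coeff lam n k * (real (n - 2 * k) * 2 * y^(n - 2 * k - 1)))
          + real n * (real n + 2 * lam) * (gegenbauer_coeff lam n k * y^(n - 2 * k)))"
    unfolding gegenbauer_deriv_def gegenbauer_deriv2_def gegenbauer_eq_sum_coeff[OF order_refl]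
    by (simp add: sum.distrib sum_subtractf sum_distrib_left sum_distrib_right y_def mult_ac)
  also have "\<dots> = (\<Sum>k\<le>n. V k - V (Suc k))"
    by (rule sum.cong[OF refl]) (simp only: gegenbauer_ode_coeff gegenbauer_coeff_shift V_def)
  also have "\<dots> = V 0 - V (Suc n)"
    by (rule sum_telescope)
  also have "\<dots> = 0"
    by (simp add: V_def gegenbauer_coeff_def)
  finally show ?thesis .
qed

definition sphere_weight :: "nat \<Rightarrow> real \<Rightarrow> real" where
  "sphere_weight d x = sqrt (1 - x^2) ^ (d - 2)"

lemma continuous_on_sphere_weight: "continuous_on S (sphere_weight d)"
  unfolding sphere_weight_def by (intro continuous_intros)

lemma sphere_weight_nonneg: "x \<in> {-1..1} \<Longrightarrow> sphere_weight d x \<ge> 0"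
  unfolding sphere_weight_def using abs_square_le_1[of x] by (simp add: abs_le_iff)

lemma sqrt_one_minus_square_power_has_real_derivative:
  assumes x: "\<bar>x\<bar> < 1" and d: "d \<ge> 2"
  shows "((\<lambda>x. sqrt (1 - x^2) ^ d) has_real_derivative - real d * x * sphere_weight d x) (at x)"
proof -
  have pos: "sqrt (1 - x^2) > 0" using x by (simp add: abs_square_less_1)
  have "((\<lambda>x. sqrt (1 - x^2)) has_real_derivative - x / sqrt (1 - x^2)) (at x)"
    using pos by (auto intro!: derivative_eq_intros simp: divide_simps)
  from DERIV_power[OF this, of d]
  have "((\<lambda>x. sqrt (1 - x^2) ^ d) has_real_derivative
          real d * (- x / sqrt (1 - x^2) * sqrt (1 - x^2) ^ (d - 1))) (at x)" by simp
  moreover have "sqrt (1 - x^2) ^ (d - 1) = sqrt (1 - x^2) * sphere_weight d x"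
    using d by (simp add: sphere_weight_def power_Suc[symmetric] Suc_diff_Suc numeral_2_eq_2)
  ultimately show ?thesis using pos by (simp add: mult.assoc)
qed

text \<open>Lagrange's identity for the Sturm--Liouville form
  ((1 - x^2)^(d/2) y')' + l (l + d - 1) (1 - x^2)^(d/2 - 1) y = 0 of the Gegenbauer equation.\<close>
lemma gegenbauer_wronskian_has_real_derivative:
  assumes x: "\<bar>x\<bar> < 1" and d: "d \<ge> 2"
  defines "lam \<equiv> (real d - 1) / 2"
  shows "((\<lambda>x. sqrt (1 - x^2) ^ d * (gegenbauer_deriv lam n x * gegenbauer m lam x
                                      - gegenbauer_deriv lam m x * gegenbauer n lam x))
          has_real_derivative (real m * (real m + real d - 1) - real n * (real n + real d - 1))
                                * (sphere_weight d x * gegenbauer n lam x * gegenbauer m lam x)) (at x)"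
proof -
  define C where "C k = gegenbauer k lam x" for k
  define D where "D k = gegenbauer_deriv lam k x" for k
  define E where "E k = gegenbauer_deriv2 lam k x" for k
  have ode: "(1 - x^2) * E k = real d * x * D k - real k * (real k + real d - 1) * C k" for k
    using gegenbauer_ode[of x lam k] unfolding C_def D_def E_def lam_def by (simp add: field_simps)
  have "sqrt (1 - x^2) ^ 2 = 1 - x^2" using x by (simp add: abs_square_le_1 less_imp_le)
  then have sq: "sqrt (1 - x^2) ^ d = (1 - x^2) * sphere_weight d x"
    using d unfolding sphere_weight_def by (metis le_add_diff_inverse power_add)
  have "((\<lambda>x. sqrt (1 - x^2) ^ d * (gegenbauer_deriv lam n x * gegenbauer m lam x
                                     - gegenbauer_deriv lam m x * gegenbauer n lam x))
         has_real_derivative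
          (- real d * x * sphere_weight d x) * (D n * C m - D m * C n)
          + ((E n * C m + D m * D n) - (E m * C n + D n * D m)) * sqrt (1 - x^2) ^ d) (at x)"
    unfolding D_def C_def E_def
    by (intro DERIV_mult DERIV_diff sqrt_one_minus_square_power_has_real_derivative
          gegenbauer_has_real_derivative gegenbauer_deriv_has_real_derivative x d)
  also have "(- real d * x * sphere_weight d x) * (D n * C m - D m * C n)
      + ((E n * C m + D m * D n) - (E m * C n + D n * D m)) * sqrt (1 - x^2) ^ d
    = - real d * x * sphere_weight d x * (D n * C m - D m * C n)
      + sphere_weight d x * ((1 - x^2) * E n * C m - (1 - x^2) * E m * C n)"
    unfolding sq by (simp add: algebra_simps)
  also have "\<dots> = (real m * (real m + real d - 1) - real n * (real n + real d - 1))
                    * (sphere_weight d x * C n * C m)"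
    unfolding ode by (simp add: algebra_simps)
  finally show ?thesis
    unfolding C_def .
qed

lemma gegenbauer_orthogonal:
  assumes d: "d \<ge> 2" and mn: "m \<noteq> n"
  defines "lam \<equiv> (real d - 1) / 2"
  shows "((\<lambda>x. sphere_weight d x * gegenbauer n lam x * gegenbauer m lam x) has_integral 0) {-1..1}"
proof -
  define K where "K = real m * (real m + real d - 1) - real n * (real n + real d - 1)"
  define W where "W x = sqrt (1 - x^2) ^ d * (gegenbauer_deriv lam n x * gegenbauer m lam x
                                               - gegenbauer_deriv lam m x * gegenbauer n lam x)" for x
  have "continuous_on {-1..1} W"
    unfolding W_def by (intro continuous_intros continuous_on_gegenbauer continuous_on_gegenbauer_deriv)
  moreover have "(W has_real_derivative K * (sphere_weight d x * gegenbauer n lam x * gegenbauer m lam x)) (at x)"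
    if "x \<in> {-1<..<1}" for x
    using gegenbauer_wronskian_has_real_derivative[of x d n m] that d
    unfolding W_def K_def lam_def by fastforce
  ultimately have "((\<lambda>x. K * (sphere_weight d x * gegenbauer n lam x * gegenbauer m lam x))
                      has_integral (W 1 - W (-1))) {-1..1}"
    by (intro fundamental_theorem_of_calculus_interior)
       (auto simp: has_real_derivative_iff_has_vector_derivative[symmetric])
  moreover have "W 1 = 0" "W (-1) = 0" unfolding W_def using d by simp_all
  ultimately have "((\<lambda>x. K * (sphere_weight d x * gegenbauer n lam x * gegenbauer m lam x))
                      has_integral 0) {-1..1}"
    by simp
  from has_integral_mult_right[OF this, of "1 / K"]
  have "((\<lambda>x. 1 / K * (K * (sphere_weight d x * gegenbauer n lam x * gegenbauer m lam x)))
           has_integral 0) {-1..1}"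
    by simp
  moreover have "K \<noteq> 0"
  proof
    assume "K = 0"
    then have "(real m - real n) * (real m + real n + real d - 1) = 0"
      unfolding K_def by (simp add: algebra_simps)
    with d mn show False by simp
  qed
  ultimately show ?thesis by simp
qed

lemma sphere_weight_has_integral:
  assumes d: "d \<ge> 2"
  shows "(sphere_weight d has_integral Beta (1 / 2) (real d / 2)) {-1..1}"
proof -
  have integrable: "sphere_weight d integrable_on {-1..1}"
    by (rule integrable_continuous_interval[OF continuous_on_sphere_weight])
  then have int: "(sphere_weight d has_integral integral {-1..1} (sphere_weight d)) {-1..1}"
    by (rule integrable_integral)
  have "ennreal (integral {-1..1} (sphere_weight d))
      = (\<integral>\<^sup>+x. indicator {-1..1} x * sqrt (1 - x^2) ^ (d - 2) \<partial>lborel)"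
    using nn_integral_has_integral_lebesgue[OF sphere_weight_nonneg int] by (simp add: sphere_weight_def)
  also have "\<dots> = ennreal (Beta (1 / 2) (real (d - 2) / 2 + 1))"
    by (rule emeasure_cball_aux_integral)
  also have "real (d - 2) / 2 + 1 = real d / 2"
    using d by (simp add: of_nat_diff field_simps)
  finally have "ennreal (integral {-1..1} (sphere_weight d)) = ennreal (Beta (1 / 2) (real d / 2))" .
  moreover have "integral {-1..1} (sphere_weight d) \<ge> 0"
    by (rule integral_nonneg[OF integrable sphere_weight_nonneg])
  moreover have "Beta (1 / 2) (real d / 2) > 0"
    unfolding Beta_def using d by (intro divide_pos_pos mult_pos_pos Gamma_real_pos) auto
  ultimately have "integral {-1..1} (sphere_weight d) = Beta (1 / 2) (real d / 2)"
    by (simp add: ennreal_inj less_imp_le)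
  with int show ?thesis by simp
qed

lemma sphere_area_ratio:
  assumes d: "d \<ge> 1"
  shows "sphere_area d / sphere_area (d - 1) = Beta (1 / 2) (real d / 2)"
proof -
  have "1 / 2 + real d / 2 = (real d + 1) / 2" by (simp add: field_simps)
  then have Beta: "Beta (1 / 2) (real d / 2) = sqrt pi * Gamma (real d / 2) / Gamma ((real d + 1) / 2)"
    by (simp only: Beta_def Gamma_one_half_real)
  have e: "(real (d - 1) + 1) / 2 = real d / 2" using d by (simp add: of_nat_diff)
  have p: "pi powr ((real d + 1) / 2) = pi powr (real d / 2) * sqrt pi"
    by (simp add: powr_add[symmetric] powr_half_sqrt[symmetric] add_divide_distrib)
  have "Gamma (real d / 2) > 0" "Gamma ((real d + 1) / 2) > 0" "pi powr (real d / 2) > 0"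
    using d by (auto intro: Gamma_real_pos)
  then show ?thesis
    unfolding sphere_area_def e p Beta by (simp add: field_simps)
qed

definition Q_next_coeff :: "nat \<Rightarrow> nat \<Rightarrow> real" where
  "Q_next_coeff d l = (real l + 1) / (real d + 2 * real l + 1)"

text \<open>The value 0 at l = 0 makes x_Q_poly hold although the index l - 1 is truncated there.\<close>
definition Q_prev_coeff :: "nat \<Rightarrow> nat \<Rightarrow> real" where
  "Q_prev_coeff d l = (if l = 0 then 0 else (real l + real d - 2) / (2 * real l + real d - 3))"

lemma Q_poly_0: "d \<ge> 2 \<Longrightarrow> Q_poly d 0 x = 1"
  by (simp add: Q_poly_def)

lemma continuous_on_Q_poly: "continuous_on S (Q_poly d l)"
  unfolding Q_poly_def[abs_def] by (intro continuous_on_mult_left continuous_on_gegenbauer)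

lemma x_Q_poly:
  assumes d: "d \<ge> 2"
  shows "x * Q_poly d l x = Q_next_coeff d l * Q_poly d (l + 1) x + Q_prev_coeff d l * Q_poly d (l - 1) x"
proof (cases l)
  case 0
  have "Q_poly d 1 x = (real d + 1) * x"
    unfolding Q_poly_def gegenbauer_1 using d by (simp add: field_simps)
  then show ?thesis
    using d 0 by (simp add: Q_poly_0 Q_next_coeff_def Q_prev_coeff_def)
next
  case (Suc n)
  define G where "G k = gegenbauer k ((real d - 1) / 2) x" for k
  have "(2 * real n + real d + 1) * x * G (n + 1) = real (n + 2) * G (n + 2) + (real n + real d - 1) * G n"
    using gegenbauer_recurrence[of n "(real d - 1) / 2" x] unfolding G_def by (simp add: field_simps)
  moreover have "x * Q_poly d l x = (2 * real n + real d + 1) * x * G (n + 1) / (real d - 1)"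
    unfolding Suc Q_poly_def G_def by (simp add: algebra_simps)
  moreover have "Q_next_coeff d l * Q_poly d (l + 1) x = real (n + 2) * G (n + 2) / (real d - 1)"
  proof -
    have "Q_next_coeff d l = real (n + 2) / (real d + 2 * real n + 3)"
         "Q_poly d (l + 1) x = (real d + 2 * real n + 3) / (real d - 1) * G (n + 2)"
      unfolding Suc Q_next_coeff_def Q_poly_def G_def by (simp_all add: algebra_simps)
    moreover have "real d + 2 * real n + 3 \<noteq> 0" by linarith
    ultimately show ?thesis by simp
  qed
  moreover have "Q_prev_coeff d l * Q_poly d (l - 1) x = (real n + real d - 1) * G n / (real d - 1)"
  proof -
    have "Q_prev_coeff d l = (real n + real d - 1) / (2 * real n + real d - 1)"
         "Q_poly d (l - 1) x = (2 * real n + real d - 1) / (real d - 1) * G n"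
      unfolding Suc Q_prev_coeff_def Q_poly_def G_def by (simp_all add: algebra_simps)
    moreover have "2 * real n + real d - 1 \<noteq> 0" using d by linarith
    ultimately show ?thesis by simp
  qed
  ultimately show ?thesis by (simp add: add_divide_distrib)
qed

definition Q_sqnorm :: "nat \<Rightarrow> nat \<Rightarrow> real" where
  "Q_sqnorm d l = integral {-1..1} (\<lambda>x. sphere_weight d x * Q_poly d l x ^ 2)"

lemma Q_poly_orthogonal:
  assumes d: "d \<ge> 2"
  shows "((\<lambda>x. sphere_weight d x * Q_poly d j x * Q_poly d k x)
           has_integral (if j = k then Q_sqnorm d j else 0)) {-1..1}"
proof (cases "j = k")
  case True
  have "continuous_on {-1..1} (\<lambda>x. sphere_weight d x * Q_poly d j x ^ 2)"
    by (intro continuous_intros continuous_on_sphere_weight continuous_on_Q_poly)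
  from integrable_integral[OF integrable_continuous_interval[OF this]] show ?thesis
    using True by (simp add: Q_sqnorm_def power2_eq_square mult.assoc)
next
  case False
  have "((\<lambda>x. (real d + 2 * real j - 1) / (real d - 1) * ((real d + 2 * real k - 1) / (real d - 1)) *
           (sphere_weight d x * gegenbauer k ((real d - 1) / 2) x * gegenbauer j ((real d - 1) / 2) x))
         has_integral 0) {-1..1}"
    by (rule has_integral_mult_right[OF gegenbauer_orthogonal[OF d False], simplified])
  then show ?thesis
    using False by (simp add: Q_poly_def mult_ac)
qed

lemma Q_poly_combination_has_integral:
  assumes d: "d \<ge> 2"
  shows "((\<lambda>x. sphere_weight d x * (a * Q_poly d j x + b * Q_poly d k x) * Q_poly d m x) has_integral
           a * (if j = m then Q_sqnorm d j else 0) + b * (if k = m then Q_sqnorm d k else 0)) {-1..1}"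
  using has_integral_add[OF has_integral_mult_right[OF Q_poly_orthogonal[OF d, of j m], of a]
                            has_integral_mult_right[OF Q_poly_orthogonal[OF d, of k m], of b]]
  by (simp add: algebra_simps)

lemma Q_sqnorm_recurrence:
  assumes d: "d \<ge> 2"
  shows "Q_next_coeff d l * Q_sqnorm d (l + 1) = Q_prev_coeff d (l + 1) * Q_sqnorm d l"
proof -
  define f where "f x = sphere_weight d x * (x * Q_poly d l x) * Q_poly d (l + 1) x" for x
  have "f = (\<lambda>x. sphere_weight d x * (Q_next_coeff d l * Q_poly d (l + 1) x
                  + Q_prev_coeff d l * Q_poly d (l - 1) x) * Q_poly d (l + 1) x)"
    by (simp add: f_def fun_eq_iff x_Q_poly[OF d])
  then have "(f has_integral Q_next_coeff d l * Q_sqnorm d (l + 1)) {-1..1}"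
    using Q_poly_combination_has_integral[OF d, of "Q_next_coeff d l" "l + 1" "Q_prev_coeff d l" "l - 1" "l + 1"]
    by (simp add: less_imp_neq)
  moreover have "f = (\<lambda>x. sphere_weight d x * (Q_next_coeff d (l + 1) * Q_poly d (l + 2) x
                  + Q_prev_coeff d (l + 1) * Q_poly d l x) * Q_poly d l x)"
    by (simp add: f_def fun_eq_iff x_Q_poly[OF d, of _ "l + 1", simplified] mult_ac)
  then have "(f has_integral Q_prev_coeff d (l + 1) * Q_sqnorm d l) {-1..1}"
    using Q_poly_combination_has_integral[OF d, of "Q_next_coeff d (l + 1)" "l + 2" "Q_prev_coeff d (l + 1)" l l]
    by simp
  ultimately show ?thesis by (rule has_integral_unique)
qed

lemma binomial_Suc_diagonal:
  assumes "d \<ge> 1"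
  shows "real (Suc l) * real ((d + l) choose Suc l) = (real d + real l) * real ((d + l - 1) choose l)"
proof -
  obtain e where e: "d + l = Suc e" using assms by (cases d) auto
  have "real (Suc e choose Suc l) * real (Suc l) = real (Suc e) * real (e choose l)"
    by (metis Suc_times_binomial_eq of_nat_mult)
  then show ?thesis using e by (simp add: mult.commute)
qed

lemma binomial_add_absorption:
  "d * ((d + L) choose d) = (d + L) * ((d + L - 1) choose L)"
  using binomial_symmetric[of d "d + L"] binomial_absorb_comp[of "d + L" L] by simp

lemma binomial_add_pred_absorption:
  assumes "d \<ge> 1"
  shows "d * ((d + L - 1) choose d) = L * ((d + L - 1) choose L)"
proof (cases L)
  case (Suc M)
  obtain e where e: "d = Suc e" using assms by (cases d) auto
  have "Suc e * ((e + Suc M) choose Suc e) = (e + Suc M) * ((e + M) choose e)"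
    using binomial_absorption[of e "e + Suc M"] by simp
  also have "(e + M) choose e = (e + M) choose M"
    using binomial_symmetric[of e "e + M"] by simp
  also have "(e + Suc M) * ((e + M) choose M) = Suc M * ((e + Suc M) choose Suc M)"
    using binomial_absorption[of M "e + Suc M"] by simp
  finally show ?thesis using e Suc by simp
qed (use assms in simp)

text \<open>The dimension of the space of spherical harmonics of degree \<open>l\<close> on \<open>S\<^sup>d\<close>.\<close>
definition harmonic_dim :: "nat \<Rightarrow> nat \<Rightarrow> real" where
  "harmonic_dim d l = (real d + 2 * real l - 1) / (real d + real l - 1) * real ((d + l - 1) choose l)"

lemma Q_next_coeff_mult_harmonic_dim:
  assumes d: "d \<ge> 2"
  shows "Q_next_coeff d l * harmonic_dim d (l + 1) = real ((d + l - 1) choose l)"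
proof -
  have pos: "real d + 2 * real l + 1 > 0" "real d + real l > 0" using d by simp_all
  have "harmonic_dim d (l + 1)
      = (real d + 2 * real l + 1) / (real d + real l) * real ((d + l) choose Suc l)"
    by (simp add: harmonic_dim_def algebra_simps)
  then have "Q_next_coeff d l * harmonic_dim d (l + 1)
      = real (Suc l) * real ((d + l) choose Suc l) / (real d + real l)"
    using pos by (simp add: Q_next_coeff_def)
  also have "\<dots> = (real d + real l) * real ((d + l - 1) choose l) / (real d + real l)"
    using d by (simp only: binomial_Suc_diagonal)
  also have "\<dots> = real ((d + l - 1) choose l)"
    using pos by simp
  finally show ?thesis .
qed

lemma Q_prev_coeff_mult_harmonic_dim:
  assumes d: "d \<ge> 2"
  shows "Q_prev_coeff d (l + 1) * harmonic_dim d l = real ((d + l - 1) choose l)"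
proof -
  have "Q_prev_coeff d (l + 1) = (real d + real l - 1) / (real d + 2 * real l - 1)"
    by (simp add: Q_prev_coeff_def algebra_simps)
  moreover have "real d + real l - 1 > 0" "real d + 2 * real l - 1 > 0" using d by simp_all
  ultimately show ?thesis
    by (simp add: harmonic_dim_def)
qed

lemma Q_sqnorm_eq:
  assumes d: "d \<ge> 2"
  shows "Q_sqnorm d l = Beta (1 / 2) (real d / 2) * harmonic_dim d l"
proof (induction l)
  case 0
  have "Q_sqnorm d 0 = integral {-1..1} (sphere_weight d)"
    using d by (simp add: Q_sqnorm_def Q_poly_0)
  then show ?case
    using d integral_unique[OF sphere_weight_has_integral[OF d]] by (simp add: harmonic_dim_def)
next
  case (Suc l)
  have "Q_next_coeff d l * Q_sqnorm d (l + 1)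
      = Beta (1 / 2) (real d / 2) * (Q_prev_coeff d (l + 1) * harmonic_dim d l)"
    using Q_sqnorm_recurrence[OF d, of l] Suc.IH by simp
  also have "\<dots> = Beta (1 / 2) (real d / 2) * (Q_next_coeff d l * harmonic_dim d (l + 1))"
    by (simp only: Q_prev_coeff_mult_harmonic_dim[OF d] Q_next_coeff_mult_harmonic_dim[OF d])
  finally show ?case
    using d by (simp add: Q_next_coeff_def mult.left_commute)
qed

lemma sum_harmonic_dim:
  assumes d: "d \<ge> 2"
  shows "(\<Sum>l\<le>L. harmonic_dim d l) = (real d + 2 * real L) / real d * real ((d + L - 1) choose L)"
proof (induction L)
  case 0
  then show ?case using d by (simp add: harmonic_dim_def)
next
  case (Suc L)
  define B where "B = real ((d + L - 1) choose L)"
  have pos: "real d > 0" "real L + 1 > 0" "real d + real L > 0" using d by simp_all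
  have binom: "real ((d + L) choose Suc L) = (real d + real L) / (real L + 1) * B"
    using binomial_Suc_diagonal[of d L] d pos by (simp add: B_def field_simps)
  have "harmonic_dim d (Suc L) = (real d + 2 * real L + 1) / (real d + real L) * real ((d + L) choose Suc L)"
    by (simp add: harmonic_dim_def algebra_simps)
  then have "(\<Sum>l\<le>Suc L. harmonic_dim d l)
      = (real d + 2 * real L) / real d * B + (real d + 2 * real L + 1) / (real L + 1) * B"
    using Suc.IH pos by (simp add: B_def binom)
  also have "\<dots> = (real d + 2 * real (Suc L)) / real d * ((real d + real L) / (real L + 1) * B)"
    using pos by (simp add: field_simps)
  finally show ?case
    by (simp add: binom)
qed

lemma Q_expansion_sqnorm_has_integral:
  assumes d: "d \<ge> 2"
  shows "((\<lambda>x. sphere_weight d x * (\<Sum>j\<le>N. a j * Q_poly d j x)^2)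
           has_integral (\<Sum>j\<le>N. (a j)^2 * Q_sqnorm d j)) {-1..1}"
proof -
  have "((\<lambda>x. \<Sum>j\<le>N. \<Sum>k\<le>N. a j * a k * (sphere_weight d x * Q_poly d j x * Q_poly d k x))
     has_integral (\<Sum>j\<le>N. \<Sum>k\<le>N. a j * a k * (if j = k then Q_sqnorm d j else 0))) {-1..1}"
    by (intro has_integral_sum finite_atMost has_integral_mult_right Q_poly_orthogonal d)
  moreover have "(\<Sum>k\<le>N. a j * a k * (if j = k then Q_sqnorm d j else 0)) = (a j)^2 * Q_sqnorm d j"
    if "j \<le> N" for j
    using that by (simp add: if_distrib[of "\<lambda>t. a j * a _ * t"] sum.delta power2_eq_square cong: if_cong)
  ultimately show ?thesis
    by (simp add: power2_eq_square sum_product sum_distrib_left mult_ac)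
qed

lemma R_poly_Suc: "R_poly d (Suc L) x = R_poly d L x + Q_poly d (Suc L) x"
  by (simp add: R_poly_def)

lemma x_R_poly:
  assumes d: "d \<ge> 2"
  shows "x * R_poly d (Suc M) x
    = R_poly d M x + Q_next_coeff d M * Q_poly d (Suc M) x + Q_next_coeff d (Suc M) * Q_poly d (Suc (Suc M)) x"
proof (induction M)
  case 0
  have "Q_prev_coeff d 1 = 1" using d by (simp add: Q_prev_coeff_def)
  then show ?case
    using x_Q_poly[OF d, of x 0] x_Q_poly[OF d, of x 1]
    by (simp add: R_poly_def Q_poly_0[OF d] Q_prev_coeff_def numeral_2_eq_2 algebra_simps)
next
  case (Suc M)
  have "Q_prev_coeff d (Suc (Suc M)) = (real d + real M) / (real d + 2 * real M + 1)"
    by (simp add: Q_prev_coeff_def algebra_simps)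
  moreover have "real d + 2 * real M + 1 > 0" using d by simp
  ultimately have coeff_sum: "Q_next_coeff d M + Q_prev_coeff d (Suc (Suc M)) = 1"
    by (simp add: Q_next_coeff_def add_divide_distrib[symmetric])
  have "x * R_poly d (Suc (Suc M)) x = x * R_poly d (Suc M) x + x * Q_poly d (Suc (Suc M)) x"
    by (simp add: R_poly_Suc[of d "Suc M"] algebra_simps)
  also have "\<dots> = R_poly d M x + (Q_next_coeff d M + Q_prev_coeff d (Suc (Suc M))) * Q_poly d (Suc M) x
      + Q_next_coeff d (Suc M) * Q_poly d (Suc (Suc M)) x
      + Q_next_coeff d (Suc (Suc M)) * Q_poly d (Suc (Suc (Suc M))) x"
    using x_Q_poly[OF d, of x "Suc (Suc M)"] by (simp add: Suc.IH algebra_simps)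
  finally show ?case
    by (simp add: coeff_sum R_poly_Suc[of d M])
qed

lemma R_poly_sqnorm_has_integral:
  assumes d: "d \<ge> 2"
  shows "((\<lambda>x. sphere_weight d x * R_poly d L x ^ 2) has_integral
           Beta (1 / 2) (real d / 2) * (real ((d + L) choose d) + real ((d + L - 1) choose d))) {-1..1}"
proof -
  have "real d * (real ((d + L) choose d) + real ((d + L - 1) choose d))
      = (real d + 2 * real L) * real ((d + L - 1) choose L)"
    using binomial_add_absorption[of d L] binomial_add_pred_absorption[of d L] d
    by (simp add: algebra_simps flip: of_nat_mult)
  then have binom: "real ((d + L) choose d) + real ((d + L - 1) choose d)
      = (real d + 2 * real L) / real d * real ((d + L - 1) choose L)"
    using d by (simp add: field_simps)
  have "(\<Sum>j\<le>L. 1\<^sup>2 * Q_sqnorm d j) = Beta (1 / 2) (real d / 2) * (\<Sum>j\<le>L. harmonic_dim d j)"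
    using d by (simp add: Q_sqnorm_eq sum_distrib_left)
  then show ?thesis
    unfolding binom using Q_expansion_sqnorm_has_integral[OF d, of "\<lambda>_. 1" L]
    by (simp add: R_poly_def sum_harmonic_dim[OF d])
qed

lemma sum_harmonic_dim_x_R_poly:
  assumes d: "d \<ge> 2" and L: "L \<ge> 1"
  shows "(\<Sum>j<L. harmonic_dim d j)
           + Q_next_coeff d (L - 1) ^ 2 * harmonic_dim d L + Q_next_coeff d L ^ 2 * harmonic_dim d (L + 1)
       = (real d * (real L + 1) / (real L * (real d + 2 * real L + 1))
           + (real d + 4 * real L - 2) / (real d + 2 * real L - 1)) * real ((d + L - 1) choose d)"
proof -
  obtain M where M: "L = Suc M" using L by (cases L) auto
  define b where "b = real ((d + M - 1) choose M)"
  define bL where "bL = real ((d + L - 1) choose L)"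
  have M_eq: "real M = real L - 1" using M by simp
  have pos: "real d > 0" "real L > 0" "real d + 2 * real L - 1 > 0" "real d + 2 * real L + 1 > 0"
    using d L by simp_all
  have sq: "Q_next_coeff d l ^ 2 * harmonic_dim d (l + 1) = Q_next_coeff d l * real ((d + l - 1) choose l)"
    for l using Q_next_coeff_mult_harmonic_dim[OF d, of l] by (simp add: power2_eq_square)
  have step: "real L * bL = (real d + real L - 1) * b"
    using binomial_Suc_diagonal[of d M] d by (simp add: M b_def bL_def add.commute)
  have top: "real ((d + L - 1) choose d) = real L / real d * bL"
    using binomial_add_pred_absorption[of d L] pos by (simp add: bL_def field_simps flip: of_nat_mult)
  have "(\<Sum>j<L. harmonic_dim d j) + Q_next_coeff d (L - 1) ^ 2 * harmonic_dim d L
      = (real d + 2 * real L - 2) / real d * b + real L / (real d + 2 * real L - 1) * b"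
  proof -
    have shift: "{..<L} = {..M}" "L - 1 = M" "harmonic_dim d L = harmonic_dim d (M + 1)" using M by auto
    show ?thesis
      unfolding shift sum_harmonic_dim[OF d] sq by (simp add: b_def Q_next_coeff_def M_eq algebra_simps)
  qed
  also have "\<dots> = (real d + 4 * real L - 2) / (real d + 2 * real L - 1) * ((real d + real L - 1) / real d * b)"
    using pos by (simp add: field_simps)
  finally have lower: "(\<Sum>j<L. harmonic_dim d j) + Q_next_coeff d (L - 1) ^ 2 * harmonic_dim d L
      = (real d + 4 * real L - 2) / (real d + 2 * real L - 1) * (real L / real d * bL)"
    using step by simp
  have "Q_next_coeff d L ^ 2 * harmonic_dim d (L + 1)
      = real d * (real L + 1) / (real L * (real d + 2 * real L + 1)) * (real L / real d * bL)"
    unfolding sq using pos by (simp add: bL_def Q_next_coeff_def)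
  then show ?thesis
    unfolding top lower by (simp add: algebra_simps)
qed

lemma x_R_poly_sqnorm_has_integral:
  assumes d: "d \<ge> 2" and L: "L \<ge> 1"
  shows "((\<lambda>x. sphere_weight d x * (x * R_poly d L x) ^ 2) has_integral
           Beta (1 / 2) (real d / 2)
             * (real d * (real L + 1) / (real L * (real d + 2 * real L + 1))
                + (real d + 4 * real L - 2) / (real d + 2 * real L - 1))
             * real ((d + L - 1) choose d)) {-1..1}"
proof -
  obtain M where M: "L = Suc M" using L by (cases L) auto
  define a where "a j = (if j \<le> M then 1 else Q_next_coeff d (j - 1))" for j
  have "x * R_poly d L x = (\<Sum>j\<le>Suc (Suc M). a j * Q_poly d j x)" for x
  proof -
    have "(\<Sum>j\<le>M. a j * Q_poly d j x) = R_poly d M x"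
      unfolding R_poly_def a_def by (rule sum.cong) auto
    then show ?thesis unfolding M x_R_poly[OF d] by (simp add: a_def)
  qed
  moreover have "(\<Sum>j\<le>Suc (Suc M). (a j)^2 * Q_sqnorm d j)
      = Beta (1 / 2) (real d / 2) * ((\<Sum>j<L. harmonic_dim d j)
          + Q_next_coeff d (L - 1) ^ 2 * harmonic_dim d L + Q_next_coeff d L ^ 2 * harmonic_dim d (L + 1))"
  proof -
    have "(\<Sum>j\<le>M. (a j)^2 * Q_sqnorm d j) = (\<Sum>j\<le>M. Beta (1 / 2) (real d / 2) * harmonic_dim d j)"
      unfolding a_def using d by (intro sum.cong) (auto simp: Q_sqnorm_eq)
    then show ?thesis
      using d by (simp add: a_def M Q_sqnorm_eq lessThan_Suc_atMost sum_distrib_left sum_distrib_right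
                   algebra_simps)
  qed
  ultimately show ?thesis
    using Q_expansion_sqnorm_has_integral[OF d, of a "Suc (Suc M)"]
    by (simp only: sum_harmonic_dim_x_R_poly[OF d L] mult.assoc)
qed

lemma one_minus_square_powr_eq_sphere_weight:
  assumes d: "d \<ge> 2" and t: "\<bar>t\<bar> < 1"
  shows "(1 - t^2) powr (real d / 2 - 1) = sphere_weight d t"
proof -
  have pos: "1 - t^2 > 0" using t by (simp add: abs_square_less_1)
  have "sphere_weight d t = ((1 - t^2) powr (1 / 2)) powr real (d - 2)"
    using pos by (simp add: sphere_weight_def powr_realpow powr_half_sqrt)
  also have "\<dots> = (1 - t^2) powr (real d / 2 - 1)"
    using d by (simp add: powr_powr of_nat_diff field_simps)
  finally show ?thesis by simp
qed

theorem lemma2: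
  fixes d L :: nat
  assumes "d \<ge> 2" and "L \<ge> 1"
  shows "(integral {-1..1} (\<lambda>t. (R_poly d L t)^2 * (1 - t^2) powr (real d / 2 - 1))
           = sphere_area d / sphere_area (d - 1)
             * (real ((d + L) choose d) + real ((d + L - 1) choose d)))
       \<and> (integral {-1..1} (\<lambda>t. (R_poly d L t)^2 * t^2 * (1 - t^2) powr (real d / 2 - 1))
           = sphere_area d / sphere_area (d - 1)
             * (real d * (real L + 1) / (real L * (real d + 2 * real L + 1))
                + (real d + 4 * real L - 2) / (real d + 2 * real L - 1))
             * real ((d + L - 1) choose d))"
proof -
  have ratio: "sphere_area d / sphere_area (d - 1) = Beta (1 / 2) (real d / 2)"
    using assms(1) by (intro sphere_area_ratio) simp
  have "integral {-1..1} (\<lambda>t. f t * (1 - t^2) powr (real d / 2 - 1))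
      = integral {-1..1} (\<lambda>t. sphere_weight d t * f t)" for f
  proof (rule integral_spike[of "{-1, 1}"])
    fix t :: real assume "t \<in> {-1..1} - {-1, 1}"
    then have "\<bar>t\<bar> < 1" by auto
    then show "sphere_weight d t * f t = f t * (1 - t^2) powr (real d / 2 - 1)"
      using one_minus_square_powr_eq_sphere_weight[OF assms(1)] by simp
  qed auto
  note spike = this
  show ?thesis
    unfolding ratio
  proof
    show "integral {-1..1} (\<lambda>t. (R_poly d L t)^2 * (1 - t^2) powr (real d / 2 - 1))
        = Beta (1 / 2) (real d / 2) * (real ((d + L) choose d) + real ((d + L - 1) choose d))"
      using spike[of "\<lambda>t. R_poly d L t ^ 2"]
            integral_unique[OF R_poly_sqnorm_has_integral[OF assms(1), of L]] by simp
    show "integral {-1..1} (\<lambda>t. (R_poly d L t)^2 * t^2 * (1 - t^2) powr (real d / 2 - 1))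
        = Beta (1 / 2) (real d / 2)
          * (real d * (real L + 1) / (real L * (real d + 2 * real L + 1))
             + (real d + 4 * real L - 2) / (real d + 2 * real L - 1))
          * real ((d + L - 1) choose d)"
      using spike[of "\<lambda>t. R_poly d L t ^ 2 * t ^ 2"]
            integral_unique[OF x_R_poly_sqnorm_has_integral[OF assms]]
      by (simp add: power_mult_distrib mult_ac)
  qed
qed

end
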